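(* Let $X$ be a finite-dimensional simplicial complex such that for all vertices $x,y$ of $X$, $\Sigma_x\subseteq\Sigma_y$ implies $x=y$. Then the map $\Omega\colon\mathrm{Aut}(X)\to\mathrm{Aut}(\mathcal{N}(X))$, $\Omega(\varphi)=\varphi_*$, is injective.
   Context: For a vertex $x$ of $X$, $\Sigma_x$ is the collection of maximal simplices of $X$ containing $x$. $\mathcal{N}(X)$ is the nerve of the collection of maximal simplices of $X$ (vertices: maximal simplices of $X$; a finite set of them is a simplex iff their common intersection is non-empty). For $\varphi\in\mathrm{Aut}(X)$ (simplicial automorphisms), $\varphi_*$ is the simplicial automorphism of $\mathcal{N}(X)$ given on vertices by $\varphi_*(K)=\varphi(K)$. *)

theory Defs
  imports Main "HOL-Library.FuncSet"
begin

definition simplicial_complex :: "'a set set \<Rightarrow> bool" where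
  "simplicial_complex X \<longleftrightarrow>
     (\<forall>s\<in>X. finite s \<and> s \<noteq> {}) \<and>
     (\<forall>s\<in>X. \<forall>t. t \<subseteq> s \<and> t \<noteq> {} \<longrightarrow> t \<in> X)"

definition vertices :: "'a set set \<Rightarrow> 'a set" where
  "vertices X = \<Union> X"

definition finite_dimensional :: "'a set set \<Rightarrow> bool" where
  "finite_dimensional X \<longleftrightarrow> (\<exists>n::nat. \<forall>s\<in>X. card s \<le> n)"

definition maximal_simplices :: "'a set set \<Rightarrow> 'a set set" where
  "maximal_simplices X = {s \<in> X. \<forall>t\<in>X. s \<subseteq> t \<longrightarrow> t = s}"

definition Sigma_v :: "'a set set \<Rightarrow> 'a \<Rightarrow> 'a set set" where
  "Sigma_v X x = {K \<in> maximal_simplices X. x \<in> K}"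

definition nerve :: "'a set set \<Rightarrow> 'a set set set" where
  "nerve X = {S. finite S \<and> S \<noteq> {} \<and> S \<subseteq> maximal_simplices X \<and> \<Inter> S \<noteq> {}}"

definition Aut :: "'a set set \<Rightarrow> ('a \<Rightarrow> 'a) set" where
  "Aut X = {\<phi>. \<phi> \<in> extensional (vertices X) \<and> bij_betw \<phi> (vertices X) (vertices X) \<and>
              (\<forall>s. s \<subseteq> vertices X \<longrightarrow> (s \<in> X \<longleftrightarrow> \<phi> ` s \<in> X))}"

text \<open>The induced automorphism \<open>\<phi>_*\<close> of the nerve, on its vertices (maximal simplices).\<close>
definition induced :: "'a set set \<Rightarrow> ('a \<Rightarrow> 'a) \<Rightarrow> ('a set \<Rightarrow> 'a set)" where
  "induced X \<phi> = restrict (\<lambda>K. \<phi> ` K) (maximal_simplices X)"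

end

theory Submission
  imports Defs
begin

text \<open>An automorphism permutes the maximal simplices, and a vertex lies in a maximal simplex
  iff its image lies in the image simplex.\<close>

lemma inj_on_image_subset_iff:
  "inj_on f C \<Longrightarrow> A \<subseteq> C \<Longrightarrow> B \<subseteq> C \<Longrightarrow> f ` A \<subseteq> f ` B \<longleftrightarrow> A \<subseteq> B"
  by (metis image_subset_iff inj_on_image_mem_iff subset_iff image_mono)

lemma simplex_subset_vertices: "s \<in> X \<Longrightarrow> s \<subseteq> vertices X"
  by (auto simp: vertices_def)

lemma Aut_inj_on_vertices: "\<phi> \<in> Aut X \<Longrightarrow> inj_on \<phi> (vertices X)"
  by (simp add: Aut_def bij_betw_def)

lemma Aut_image_simplices:
  assumes "\<phi> \<in> Aut X"
  shows "bij_betw ((`) \<phi>) X X"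
proof (rule bij_betwI')
  have simplex_iff: "s \<in> X \<longleftrightarrow> \<phi> ` s \<in> X" if "s \<subseteq> vertices X" for s
    using assms that by (simp add: Aut_def)
  show "\<phi> ` s = \<phi> ` t \<longleftrightarrow> s = t" if "s \<in> X" "t \<in> X" for s t
    using inj_on_image_eq_iff[OF Aut_inj_on_vertices[OF assms]] that
    by (simp add: simplex_subset_vertices)
  show "\<phi> ` s \<in> X" if "s \<in> X" for s
    using simplex_iff that simplex_subset_vertices by blast
  show "\<exists>s\<in>X. t = \<phi> ` s" if t: "t \<in> X" for t
  proof
    define s where "s = {v \<in> vertices X. \<phi> v \<in> t}"
    show "t = \<phi> ` s"
      using assms simplex_subset_vertices[OF t] by (auto simp: s_def Aut_def bij_betw_def)
    then show "s \<in> X"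
      using simplex_iff[of s] t by (simp add: s_def)
  qed
qed

lemma Aut_image_maximal_simplices:
  assumes "\<phi> \<in> Aut X"
  shows "(`) \<phi> ` maximal_simplices X = maximal_simplices X"
proof -
  have bij: "bij_betw ((`) \<phi>) X X"
    using Aut_image_simplices[OF assms] .
  have subset_iff: "\<phi> ` s \<subseteq> \<phi> ` t \<longleftrightarrow> s \<subseteq> t" if "s \<in> X" "t \<in> X" for s t
    using inj_on_image_subset_iff[OF Aut_inj_on_vertices[OF assms]] that
    by (simp add: simplex_subset_vertices)
  have eq_iff: "\<phi> ` s = \<phi> ` t \<longleftrightarrow> s = t" if "s \<in> X" "t \<in> X" for s t
    using inj_on_eq_iff[OF bij_betw_imp_inj_on[OF bij] that] .
  have max_iff: "\<phi> ` s \<in> maximal_simplices X \<longleftrightarrow> s \<in> maximal_simplices X" if s: "s \<in> X" for s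
  proof -
    have "\<phi> ` s \<in> maximal_simplices X \<longleftrightarrow> (\<forall>u\<in>(`) \<phi> ` X. \<phi> ` s \<subseteq> u \<longrightarrow> u = \<phi> ` s)"
      using bij s by (auto simp: maximal_simplices_def bij_betw_def)
    also have "\<dots> \<longleftrightarrow> (\<forall>t\<in>X. s \<subseteq> t \<longrightarrow> t = s)"
      using subset_iff eq_iff s by auto
    finally show ?thesis
      using s by (simp add: maximal_simplices_def)
  qed
  have maximal_subset: "maximal_simplices X \<subseteq> X"
    by (auto simp: maximal_simplices_def)
  show ?thesis
  proof
    show "(`) \<phi> ` maximal_simplices X \<subseteq> maximal_simplices X"
      using max_iff maximal_subset by blast
    show "maximal_simplices X \<subseteq> (`) \<phi> ` maximal_simplices X"
    proof
      fix L assume L: "L \<in> maximal_simplices X"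
      then obtain s where "s \<in> X" "L = \<phi> ` s"
        using bij_betw_imp_surj_on[OF bij] maximal_subset by blast
      with L max_iff show "L \<in> (`) \<phi> ` maximal_simplices X"
        by blast
    qed
  qed
qed

lemma Sigma_v_Aut:
  assumes "\<phi> \<in> Aut X" and x: "x \<in> vertices X"
  shows "Sigma_v X (\<phi> x) = induced X \<phi> ` Sigma_v X x"
proof -
  have mem_iff: "\<phi> x \<in> \<phi> ` K \<longleftrightarrow> x \<in> K" if "K \<in> maximal_simplices X" for K
    using inj_on_image_mem_iff[OF Aut_inj_on_vertices[OF assms(1)] x] that
    by (simp add: maximal_simplices_def simplex_subset_vertices)
  have "Sigma_v X (\<phi> x) = {L \<in> (`) \<phi> ` maximal_simplices X. \<phi> x \<in> L}"
    by (simp add: Sigma_v_def Aut_image_maximal_simplices[OF assms(1)])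
  also have "\<dots> = (`) \<phi> ` Sigma_v X x"
    using mem_iff by (auto simp: Sigma_v_def)
  also have "\<dots> = induced X \<phi> ` Sigma_v X x"
    by (rule image_cong) (auto simp: induced_def Sigma_v_def)
  finally show ?thesis .
qed

theorem proposition3p8:
  fixes X :: "'a set set"
  assumes "simplicial_complex X"
    and "finite_dimensional X"
    and "\<forall>x\<in>vertices X. \<forall>y\<in>vertices X. Sigma_v X x \<subseteq> Sigma_v X y \<longrightarrow> x = y"
  shows "inj_on (induced X) (Aut X)"
proof (rule inj_onI)
  fix \<phi> \<psi> assume \<phi>: "\<phi> \<in> Aut X" and \<psi>: "\<psi> \<in> Aut X" and induced_eq: "induced X \<phi> = induced X \<psi>"
  have "\<phi> \<in> extensional (vertices X)" "\<psi> \<in> extensional (vertices X)"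
    using \<phi> \<psi> by (auto simp: Aut_def)
  moreover have "\<phi> x = \<psi> x" if x: "x \<in> vertices X" for x
  proof -
    have "\<phi> x \<in> vertices X" "\<psi> x \<in> vertices X"
      using \<phi> \<psi> x by (auto simp: Aut_def bij_betw_def)
    moreover have "Sigma_v X (\<phi> x) = Sigma_v X (\<psi> x)"
      using Sigma_v_Aut[OF \<phi> x] Sigma_v_Aut[OF \<psi> x] induced_eq by simp
    ultimately show ?thesis
      using assms(3) by blast
  qed
  ultimately show "\<phi> = \<psi>"
    by (rule extensionalityI)
qed

end
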